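(* Let $T$ be a rooted tree. (i) $I_1(T)>I_0(T)$. (ii) If $v$ is a leaf of $T$, then $3I_v(T)\ge I(T)+2$. (iii) If $v$ and $w$ are distinct leaves of $T$, then $3I_{vw}(T)\ge I_v(T)$.
   Context: A rooted tree $T$ is a finite tree with a distinguished vertex, its root (a one-vertex tree's root counts as a leaf). For vertices $u,v$, the infimum of $u$ and $v$ is the vertex common to the path from $u$ to the root and the path from $v$ to the root that is furthest from the root. A set $X\subseteq V(T)$ is infima closed if the infimum of any two elements of $X$ lies in $X$. $I(T)$ denotes the number of nonempty infima closed subsets of $V(T)$; $I_0(T)$ the number of nonempty infima closed sets not containing the root; $I_1(T)$ the number of infima closed sets containing the root; $I_v(T)$ the number of infima closed sets containing vertex $v$; $I_{vw}(T)$ the number containing both $v$ and $w$. *)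

theory Defs
  imports Main
begin

text \<open>A rooted tree is represented by a finite vertex set V, a root r \<in> V and a
parent map par: every non-root vertex has its parent in V, and every vertex
reaches the root by iterating par (hence there are no cycles).\<close>

definition rooted_tree :: "'a set \<Rightarrow> 'a \<Rightarrow> ('a \<Rightarrow> 'a) \<Rightarrow> bool" where
  "rooted_tree V r par \<longleftrightarrow> finite V \<and> r \<in> V \<and> (\<forall>v\<in>V - {r}. par v \<in> V)
     \<and> (\<forall>v\<in>V. \<exists>n. (par ^^ n) v = r)"

definition on_root_path :: "'a \<Rightarrow> ('a \<Rightarrow> 'a) \<Rightarrow> 'a \<Rightarrow> 'a \<Rightarrow> bool" where
  "on_root_path r par u v \<longleftrightarrow> (\<exists>n. (par ^^ n) v = u \<and> (\<forall>k<n. (par ^^ k) v \<noteq> r))"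

definition tree_inf :: "'a \<Rightarrow> ('a \<Rightarrow> 'a) \<Rightarrow> 'a \<Rightarrow> 'a \<Rightarrow> 'a" where
  "tree_inf r par u v = (THE w. on_root_path r par w u \<and> on_root_path r par w v \<and>
      (\<forall>w'. on_root_path r par w' u \<and> on_root_path r par w' v \<longrightarrow> on_root_path r par w' w))"

definition is_leaf :: "'a set \<Rightarrow> 'a \<Rightarrow> ('a \<Rightarrow> 'a) \<Rightarrow> 'a \<Rightarrow> bool" where
  "is_leaf V r par v \<longleftrightarrow> v \<in> V \<and> \<not> (\<exists>u\<in>V - {r}. par u = v)"

definition inf_closed :: "'a \<Rightarrow> ('a \<Rightarrow> 'a) \<Rightarrow> 'a set \<Rightarrow> bool" where
  "inf_closed r par X \<longleftrightarrow> (\<forall>x\<in>X. \<forall>y\<in>X. tree_inf r par x y \<in> X)"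

definition ic_sets :: "'a set \<Rightarrow> 'a \<Rightarrow> ('a \<Rightarrow> 'a) \<Rightarrow> 'a set set" where
  "ic_sets V r par = {X. X \<subseteq> V \<and> inf_closed r par X}"

definition I_all :: "'a set \<Rightarrow> 'a \<Rightarrow> ('a \<Rightarrow> 'a) \<Rightarrow> nat" where
  "I_all V r par = card {X \<in> ic_sets V r par. X \<noteq> {}}"

definition I0 :: "'a set \<Rightarrow> 'a \<Rightarrow> ('a \<Rightarrow> 'a) \<Rightarrow> nat" where
  "I0 V r par = card {X \<in> ic_sets V r par. X \<noteq> {} \<and> r \<notin> X}"

definition I1 :: "'a set \<Rightarrow> 'a \<Rightarrow> ('a \<Rightarrow> 'a) \<Rightarrow> nat" where
  "I1 V r par = card {X \<in> ic_sets V r par. r \<in> X}"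

definition Iv :: "'a set \<Rightarrow> 'a \<Rightarrow> ('a \<Rightarrow> 'a) \<Rightarrow> 'a \<Rightarrow> nat" where
  "Iv V r par v = card {X \<in> ic_sets V r par. v \<in> X}"

definition Ivw :: "'a set \<Rightarrow> 'a \<Rightarrow> ('a \<Rightarrow> 'a) \<Rightarrow> 'a \<Rightarrow> 'a \<Rightarrow> nat" where
  "Ivw V r par v w = card {X \<in> ic_sets V r par. v \<in> X \<and> w \<in> X}"

end

theory Submission
  imports Defs
begin

text \<open>
  (i) Adding the root is an injection from the nonempty infima closed sets avoiding the root into
  those containing it, and its image misses \<open>{r}\<close>.

  For (ii) and (iii) let \<open>c\<close> be the child of the root above the leaf \<open>v\<close>, let \<open>B\<close> be the subtree
  rooted at \<open>c\<close> and \<open>R\<close> the tree that remains when \<open>B\<close> is removed. The infimum of a vertex of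
  \<open>B\<close> and a vertex of \<open>R\<close> is the root. Hence an infima closed set containing the root is an
  arbitrary infima closed subset of \<open>B\<close> together with an infima closed subset of \<open>R\<close> containing
  the root, while one avoiding the root lies inside \<open>B\<close> or inside \<open>R\<close>. This yields
  \<open>I\<^sub>1(T) = (I(B) + 1) I\<^sub>1(R)\<close>, \<open>I\<^sub>0(T) = I(B) + I\<^sub>0(R)\<close>, \<open>I\<^sub>v(T) = I\<^sub>v(B) (1 + I\<^sub>1(R))\<close> and
  similar product formulas for \<open>I\<^sub>v\<^sub>w\<close>, from which (ii) and (iii) follow by induction on the size
  of the tree, using (i) for \<open>R\<close>. When \<open>w\<close> lies in \<open>R\<close>, (iii) needs the bound
  \<open>3 I\<^sub>w\<^sub>r(R) \<ge> I\<^sub>1(R) + 1\<close>, which follows from (ii) applied to the branch of \<open>R\<close> containing \<open>w\<close>.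
\<close>

definition depth :: "'a \<Rightarrow> ('a \<Rightarrow> 'a) \<Rightarrow> 'a \<Rightarrow> nat" where
  "depth r par x = (LEAST n. (par ^^ n) x = r)"

definition is_tree_inf :: "'a \<Rightarrow> ('a \<Rightarrow> 'a) \<Rightarrow> 'a \<Rightarrow> 'a \<Rightarrow> 'a \<Rightarrow> bool" where
  "is_tree_inf r par x y w \<longleftrightarrow> on_root_path r par w x \<and> on_root_path r par w y \<and>
      (\<forall>w'. on_root_path r par w' x \<and> on_root_path r par w' y \<longrightarrow> on_root_path r par w' w)"

lemma tree_inf_eq_The: "tree_inf r par x y = (THE w. is_tree_inf r par x y w)"
  unfolding tree_inf_def is_tree_inf_def ..

lemma is_tree_inf_commute: "is_tree_inf r par x y w \<longleftrightarrow> is_tree_inf r par y x w"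
  unfolding is_tree_inf_def by blast

lemma on_root_path_refl: "on_root_path r par x x"
  unfolding on_root_path_def by (rule exI[of _ 0]) simp

lemma funpow_below_depth: "k < depth r par x \<Longrightarrow> (par ^^ k) x \<noteq> r"
  unfolding depth_def using not_less_Least by blast

locale rooted =
  fixes V :: "'a set" and r :: 'a and par :: "'a \<Rightarrow> 'a"
  assumes rooted_tree: "rooted_tree V r par"
begin

abbreviation ancestor :: "'a \<Rightarrow> 'a \<Rightarrow> bool" where
  "ancestor u x \<equiv> on_root_path r par u x"

lemma finite_V: "finite V"
  using rooted_tree by (simp add: rooted_tree_def)

lemma root_in_V: "r \<in> V"
  using rooted_tree by (simp add: rooted_tree_def)

lemma parent_in_V: "x \<in> V \<Longrightarrow> x \<noteq> r \<Longrightarrow> par x \<in> V"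
  using rooted_tree by (simp add: rooted_tree_def)

lemma funpow_depth: "x \<in> V \<Longrightarrow> (par ^^ depth r par x) x = r"
  unfolding depth_def by (rule LeastI_ex) (use rooted_tree in \<open>auto simp: rooted_tree_def\<close>)

lemma depth_root: "depth r par r = 0"
  unfolding depth_def by (rule Least_equality) auto

lemma depth_pos: "x \<in> V \<Longrightarrow> x \<noteq> r \<Longrightarrow> 0 < depth r par x"
  using funpow_depth by (metis funpow_0 gr0I)

lemma depth_funpow:
  assumes "x \<in> V" "k \<le> depth r par x"
  shows "depth r par ((par ^^ k) x) = depth r par x - k"
  unfolding depth_def[of r par "(par ^^ k) x"]
proof (rule Least_equality)
  show "(par ^^ (depth r par x - k)) ((par ^^ k) x) = r"
    using funpow_depth[OF assms(1)] assms(2) by (metis comp_apply funpow_add le_add_diff_inverse2)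
next
  fix n assume "(par ^^ n) ((par ^^ k) x) = r"
  then have "(par ^^ (n + k)) x = r" by (simp add: funpow_add)
  then show "depth r par x - k \<le> n" using funpow_below_depth[of "n + k" r par x] by linarith
qed

lemma funpow_in_V: "x \<in> V \<Longrightarrow> k \<le> depth r par x \<Longrightarrow> (par ^^ k) x \<in> V"
proof (induction k)
  case (Suc k)
  then show ?case using funpow_below_depth[of k r par x] parent_in_V by simp
qed simp

lemma ancestor_iff_funpow:
  assumes "x \<in> V"
  shows "ancestor u x \<longleftrightarrow> (\<exists>n \<le> depth r par x. (par ^^ n) x = u)"
proof
  assume "ancestor u x"
  then obtain n where n: "(par ^^ n) x = u" "\<forall>k<n. (par ^^ k) x \<noteq> r"
    unfolding on_root_path_def by blast
  then have "n \<le> depth r par x" using funpow_depth[OF assms] by (meson not_le)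
  with n show "\<exists>n \<le> depth r par x. (par ^^ n) x = u" by blast
next
  assume "\<exists>n \<le> depth r par x. (par ^^ n) x = u"
  then obtain n where "n \<le> depth r par x" "(par ^^ n) x = u" by blast
  moreover have "\<forall>k<n. (par ^^ k) x \<noteq> r"
    using calculation(1) funpow_below_depth[of _ r par x] by simp
  ultimately show "ancestor u x" unfolding on_root_path_def by blast
qed

lemma ancestorE:
  assumes "x \<in> V" "ancestor u x"
  obtains n where "n \<le> depth r par x" "(par ^^ n) x = u" "depth r par u = depth r par x - n"
  using assms ancestor_iff_funpow depth_funpow by metis

lemma ancestor_in_V: "x \<in> V \<Longrightarrow> ancestor u x \<Longrightarrow> u \<in> V"
  by (metis ancestorE funpow_in_V)

lemma root_ancestor: "x \<in> V \<Longrightarrow> ancestor r x"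
  using ancestor_iff_funpow funpow_depth by blast

lemma ancestor_of_root: "ancestor u r \<Longrightarrow> u = r"
  using ancestor_iff_funpow[OF root_in_V] depth_root by auto

lemma parent_ancestor: "x \<in> V \<Longrightarrow> x \<noteq> r \<Longrightarrow> ancestor (par x) x"
  using ancestor_iff_funpow[of x "par x"] depth_pos
  by (metis One_nat_def Suc_leI funpow.simps(2) funpow_0 o_apply)

lemma ancestor_trans:
  assumes "x \<in> V" "ancestor b x" "ancestor a b"
  shows "ancestor a x"
proof -
  obtain i where i: "i \<le> depth r par x" "(par ^^ i) x = b" "depth r par b = depth r par x - i"
    using ancestorE assms(1,2) .
  obtain j where j: "j \<le> depth r par b" "(par ^^ j) b = a"
    using ancestorE ancestor_in_V assms by metis
  have "j + i \<le> depth r par x" "(par ^^ (j + i)) x = a"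
    using i j by (auto simp: funpow_add)
  then show ?thesis using ancestor_iff_funpow[OF assms(1)] by blast
qed

lemma ancestor_depth_less:
  assumes "x \<in> V" "ancestor a x" "a \<noteq> x"
  shows "depth r par a < depth r par x"
proof -
  obtain i where "i \<le> depth r par x" "(par ^^ i) x = a" "depth r par a = depth r par x - i"
    using ancestorE assms(1,2) .
  moreover have "i \<noteq> 0" using calculation(2) assms(3) by (metis funpow_0)
  ultimately show ?thesis by linarith
qed

lemma ancestor_antisym: "a \<in> V \<Longrightarrow> b \<in> V \<Longrightarrow> ancestor a b \<Longrightarrow> ancestor b a \<Longrightarrow> a = b"
  by (metis ancestor_depth_less less_asym)

lemma ancestor_linear:
  assumes "x \<in> V" "ancestor a x" "ancestor b x"
  shows "ancestor a b \<or> ancestor b a"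
proof -
  obtain i where i: "i \<le> depth r par x" "(par ^^ i) x = a" "depth r par a = depth r par x - i"
    using ancestorE assms(1,2) .
  obtain j where j: "j \<le> depth r par x" "(par ^^ j) x = b" "depth r par b = depth r par x - j"
    using ancestorE assms(1,3) .
  have "(par ^^ (j - i)) a = b" if "i \<le> j"
    using that i(2) j(2) by (metis funpow_add le_add_diff_inverse2 o_apply)
  moreover have "(par ^^ (i - j)) b = a" if "j \<le> i"
    using that i(2) j(2) by (metis funpow_add le_add_diff_inverse2 o_apply)
  ultimately show ?thesis
    using i j ancestor_iff_funpow ancestor_in_V assms by (metis diff_le_mono le_cases)
qed

lemma ancestor_parent:
  assumes "x \<in> V" "ancestor u x" "u \<noteq> x"
  shows "ancestor u (par x)"
proof (rule ccontr)
  assume not_anc: "\<not> ancestor u (par x)"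
  have "x \<noteq> r" using assms ancestor_of_root by blast
  then have "ancestor (par x) x" "par x \<in> V" using parent_ancestor parent_in_V assms(1) by auto
  with not_anc have "ancestor (par x) u" "par x \<noteq> u"
    using ancestor_linear[OF assms(1,2)] on_root_path_refl by metis+
  then have "depth r par (par x) < depth r par u"
    using ancestor_depth_less ancestor_in_V assms(1,2) by blast
  moreover have "depth r par u < depth r par x" using ancestor_depth_less assms by blast
  moreover have "depth r par (par x) = depth r par x - 1"
    using depth_funpow[OF assms(1), of 1] depth_pos[OF assms(1) \<open>x \<noteq> r\<close>] by simp
  ultimately show False by linarith
qed

abbreviation meet :: "'a \<Rightarrow> 'a \<Rightarrow> 'a" where
  "meet x y \<equiv> tree_inf r par x y"

lemma is_tree_inf_exists:
  assumes "x \<in> V" "y \<in> V"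
  shows "\<exists>w. is_tree_inf r par x y w"
proof -
  let ?common = "\<lambda>w. ancestor w x \<and> ancestor w y"
  have "?common r" using root_ancestor assms by blast
  moreover have "\<forall>w. ?common w \<longrightarrow> depth r par w < Suc (depth r par x)"
    by (metis ancestorE assms(1) diff_le_self le_imp_less_Suc)
  ultimately obtain w where w: "?common w" and deepest: "\<And>w'. ?common w' \<Longrightarrow> depth r par w' \<le> depth r par w"
    using ex_has_greatest_nat[of ?common r "depth r par"] by blast
  have "ancestor w' w" if "?common w'" for w'
  proof -
    have "ancestor w' w \<or> ancestor w w'" using ancestor_linear assms(1) w that by blast
    moreover have "\<not> depth r par w < depth r par w'" using deepest that by (simp add: not_less)
    then have "w = w'" if "ancestor w w'"
      using ancestor_depth_less ancestor_in_V assms(1) \<open>?common w'\<close> that by blast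
    ultimately show ?thesis using on_root_path_refl by blast
  qed
  with w show ?thesis unfolding is_tree_inf_def by blast
qed

lemma tree_inf_eqI:
  assumes "x \<in> V" "is_tree_inf r par x y w"
  shows "meet x y = w"
  unfolding tree_inf_eq_The
proof (rule the_equality)
  fix w' assume "is_tree_inf r par x y w'"
  with assms show "w' = w"
    unfolding is_tree_inf_def using ancestor_antisym ancestor_in_V by metis
qed (rule assms(2))

lemma is_tree_inf_meet: "x \<in> V \<Longrightarrow> y \<in> V \<Longrightarrow> is_tree_inf r par x y (meet x y)"
  using is_tree_inf_exists tree_inf_eqI by metis

lemma meet_ancestor:
  assumes "x \<in> V" "y \<in> V"
  shows "ancestor (meet x y) x" "ancestor (meet x y) y"
  using is_tree_inf_meet[OF assms] unfolding is_tree_inf_def by blast+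

lemma meet_in_V: "x \<in> V \<Longrightarrow> y \<in> V \<Longrightarrow> meet x y \<in> V"
  using meet_ancestor ancestor_in_V by blast

lemma meet_commute: "x \<in> V \<Longrightarrow> y \<in> V \<Longrightarrow> meet x y = meet y x"
  using is_tree_inf_meet is_tree_inf_commute tree_inf_eqI by metis

lemma meet_root: "x \<in> V \<Longrightarrow> meet x r = r"
  using is_tree_inf_meet[OF _ root_in_V] meet_ancestor(2)[OF _ root_in_V] ancestor_of_root
  by blast

lemma root_meet: "x \<in> V \<Longrightarrow> meet r x = r"
  using meet_commute meet_root root_in_V by metis

lemma inf_closed_insert_root:
  assumes "X \<subseteq> V" "inf_closed r par X"
  shows "inf_closed r par (insert r X)"
  using assms meet_root root_meet root_in_V unfolding inf_closed_def by (auto simp: subset_iff)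

lemma finite_ic_sets: "finite {X \<in> ic_sets V r par. P X}"
  using finite_V unfolding ic_sets_def by simp

lemma card_ic_sets: "card (ic_sets V r par) = I_all V r par + 1"
proof -
  have "ic_sets V r par = insert {} {X \<in> ic_sets V r par. X \<noteq> {}}"
    unfolding ic_sets_def inf_closed_def by auto
  moreover have "card (insert {} {X \<in> ic_sets V r par. X \<noteq> {}}) = Suc (card {X \<in> ic_sets V r par. X \<noteq> {}})"
    using finite_ic_sets by (rule card_insert_disjoint) simp
  ultimately show ?thesis unfolding I_all_def by simp
qed

lemma I_all_eq_I0_plus_I1: "I_all V r par = I0 V r par + I1 V r par"
proof -
  have "{X \<in> ic_sets V r par. X \<noteq> {}} =
      {X \<in> ic_sets V r par. X \<noteq> {} \<and> r \<notin> X} \<union> {X \<in> ic_sets V r par. r \<in> X}" by blast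
  moreover have "card ({X \<in> ic_sets V r par. X \<noteq> {} \<and> r \<notin> X} \<union> {X \<in> ic_sets V r par. r \<in> X}) =
      card {X \<in> ic_sets V r par. X \<noteq> {} \<and> r \<notin> X} + card {X \<in> ic_sets V r par. r \<in> X}"
    by (rule card_Un_disjoint[OF finite_ic_sets finite_ic_sets]) blast
  ultimately show ?thesis unfolding I_all_def I0_def I1_def by simp
qed

lemma I0_less_I1: "I0 V r par < I1 V r par"
proof -
  let ?S0 = "{X \<in> ic_sets V r par. X \<noteq> {} \<and> r \<notin> X}" and ?S1 = "{X \<in> ic_sets V r par. r \<in> X}"
  have "inj_on (insert r) ?S0" by (rule inj_onI) (metis Diff_insert_absorb mem_Collect_eq)
  moreover have "insert r ` ?S0 \<subseteq> ?S1 - {{r}}"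
    using inf_closed_insert_root root_in_V unfolding ic_sets_def by auto
  ultimately have "card ?S0 \<le> card (?S1 - {{r}})"
    using finite_ic_sets by (intro card_inj_on_le) blast+
  moreover have "{r} \<in> ?S1"
    using inf_closed_insert_root[of "{}"] root_in_V unfolding ic_sets_def inf_closed_def by auto
  then have "card (?S1 - {{r}}) < card ?S1" by (intro card_Diff1_less finite_ic_sets)
  ultimately show ?thesis unfolding I0_def I1_def by linarith
qed

lemma obtain_root_child:
  assumes "x \<in> V" "x \<noteq> r"
  obtains c where "c \<in> V" "c \<noteq> r" "par c = r" "ancestor c x"
proof
  let ?c = "(par ^^ (depth r par x - 1)) x"
  have pos: "0 < depth r par x" using depth_pos assms .
  show "?c \<in> V" using funpow_in_V assms(1) by simp
  show "?c \<noteq> r" using funpow_below_depth pos by (metis diff_less zero_less_one)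
  show "par ?c = r" using funpow_depth[OF assms(1)] pos by (metis Suc_pred' funpow.simps(2) o_apply)
  show "ancestor ?c x" using ancestor_iff_funpow[OF assms(1)] diff_le_self by blast
qed

lemma root_leaf_imp_singleton: "is_leaf V r par r \<Longrightarrow> x \<in> V \<Longrightarrow> x = r"
  unfolding is_leaf_def using obtain_root_child by (metis Diff_iff singletonD)

end

locale root_child = rooted +
  fixes c :: 'a
  assumes child_in_V: "c \<in> V" and child_ne_root: "c \<noteq> r" and parent_child: "par c = r"
begin

definition branch :: "'a set" where
  "branch = {x \<in> V. ancestor c x}"

definition rest :: "'a set" where
  "rest = V - branch"

lemma depth_child: "depth r par c = 1"
  unfolding depth_def
proof (rule Least_equality)
  fix n assume "(par ^^ n) c = r"
  then show "1 \<le> n" using child_ne_root by (cases n) auto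
qed (simp add: parent_child)

lemma ancestor_child:
  assumes "ancestor w c"
  shows "w = c \<or> w = r"
proof -
  obtain n where "n \<le> 1" "(par ^^ n) c = w"
    using ancestor_iff_funpow[OF child_in_V] depth_child assms by auto
  then show ?thesis using parent_child by (cases n) auto
qed

lemma child_in_branch: "c \<in> branch"
  unfolding branch_def using child_in_V by (simp add: on_root_path_refl)

lemma root_notin_branch: "r \<notin> branch"
  unfolding branch_def using ancestor_of_root child_ne_root by blast

lemma root_in_rest: "r \<in> rest"
  unfolding rest_def using root_in_V root_notin_branch by blast

lemma branch_subset_V: "branch \<subseteq> V"
  unfolding branch_def by blast

lemma rest_subset_V: "rest \<subseteq> V"
  unfolding rest_def by blast

lemma rooted_tree_branch: "rooted_tree branch c par"
  unfolding rooted_tree_def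
proof (intro conjI ballI)
  show "finite branch" using finite_subset[OF branch_subset_V finite_V] .
  show "c \<in> branch" by (rule child_in_branch)
next
  fix x assume "x \<in> branch - {c}"
  then have "x \<in> V" "x \<noteq> r" "ancestor c x" "x \<noteq> c"
    using root_notin_branch unfolding branch_def by auto
  then show "par x \<in> branch"
    unfolding branch_def using ancestor_parent parent_in_V by blast
next
  fix x assume "x \<in> branch"
  then show "\<exists>n. (par ^^ n) x = c" unfolding branch_def on_root_path_def by blast
qed

lemma rooted_tree_rest: "rooted_tree rest r par"
  unfolding rooted_tree_def
proof (intro conjI ballI)
  show "finite rest" using finite_subset[OF rest_subset_V finite_V] .
  show "r \<in> rest" by (rule root_in_rest)
next
  fix x assume "x \<in> rest - {r}"
  then have "x \<in> V" "x \<noteq> r" "\<not> ancestor c x" unfolding rest_def branch_def by auto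
  moreover have "\<not> ancestor c (par x)"
    using ancestor_trans[OF _ parent_ancestor] calculation by blast
  ultimately show "par x \<in> rest" unfolding rest_def branch_def using parent_in_V by blast
next
  fix x assume "x \<in> rest"
  then show "\<exists>n. (par ^^ n) x = r" using funpow_depth rest_subset_V by blast
qed

sublocale branch_tree: rooted branch c par
  by (rule rooted.intro, rule rooted_tree_branch)

sublocale rest_tree: rooted rest r par
  by (rule rooted.intro, rule rooted_tree_rest)

lemma branch_ancestor_iff:
  assumes "x \<in> branch"
  shows "on_root_path c par u x \<longleftrightarrow> ancestor u x \<and> u \<noteq> r"
proof -
  have x: "x \<in> V" "ancestor c x" using assms unfolding branch_def by auto
  obtain j where j: "j \<le> depth r par x" "(par ^^ j) x = c" "depth r par c = depth r par x - j"
    using ancestorE[OF x] .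
  have j_eq: "j = depth r par x - 1" and j_less: "j < depth r par x"
    using j(1,3) depth_child by auto
  have hits_child: "k = j" if "(par ^^ k) x = c" "k \<le> depth r par x" for k
  proof -
    have "depth r par x - k = 1" using depth_funpow[OF x(1) that(2)] that(1) depth_child by simp
    then show ?thesis using j_eq by linarith
  qed
  show ?thesis
  proof
    assume "on_root_path c par u x"
    then obtain n where n: "(par ^^ n) x = u" "\<forall>k<n. (par ^^ k) x \<noteq> c"
      unfolding on_root_path_def by blast
    have "n \<le> j" using n(2) j(2) not_le by blast
    then have n_less: "n < depth r par x" using j_less by linarith
    have "ancestor u x"
      unfolding ancestor_iff_funpow[OF x(1)] using n(1) n_less by (intro exI[of _ n]) simp
    moreover have "u \<noteq> r" using funpow_below_depth[OF n_less] n(1) by simp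
    ultimately show "ancestor u x \<and> u \<noteq> r" ..
  next
    assume u: "ancestor u x \<and> u \<noteq> r"
    then obtain n where n: "n \<le> depth r par x" "(par ^^ n) x = u"
      using ancestor_iff_funpow[OF x(1)] by blast
    have "n \<noteq> depth r par x" using u n(2) funpow_depth[OF x(1)] by auto
    then have "n \<le> j" using n(1) j_eq by linarith
    then have "\<forall>k<n. (par ^^ k) x \<noteq> c" using hits_child n(1) by fastforce
    with n(2) show "on_root_path c par u x" unfolding on_root_path_def by blast
  qed
qed

lemma branch_meet:
  assumes "x \<in> branch" "y \<in> branch"
  shows "tree_inf c par x y = meet x y"
proof -
  let ?w = "tree_inf c par x y"
  have w: "?w \<in> branch" using branch_tree.meet_in_V assms .
  have "is_tree_inf r par x y ?w"
    unfolding is_tree_inf_def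
  proof (intro conjI allI impI)
    show "ancestor ?w x" "ancestor ?w y"
      using branch_tree.meet_ancestor assms branch_ancestor_iff by blast+
  next
    fix w' assume w': "ancestor w' x \<and> ancestor w' y"
    show "ancestor w' ?w"
    proof (cases "w' = r")
      case True
      then show ?thesis using root_ancestor w branch_subset_V by blast
    next
      case False
      then have "on_root_path c par w' x" "on_root_path c par w' y"
        using w' branch_ancestor_iff assms by blast+
      then have "on_root_path c par w' ?w"
        using branch_tree.is_tree_inf_meet[OF assms] unfolding is_tree_inf_def by blast
      then show ?thesis using branch_ancestor_iff[OF w] by blast
    qed
  qed
  moreover have "x \<in> V" using assms(1) branch_subset_V by blast
  ultimately show ?thesis by (simp add: tree_inf_eqI)
qed

lemma inf_closed_branch_iff:
  assumes "A \<subseteq> branch"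
  shows "inf_closed c par A \<longleftrightarrow> inf_closed r par A"
proof -
  have "\<And>x y. x \<in> A \<Longrightarrow> y \<in> A \<Longrightarrow> tree_inf c par x y = meet x y"
    using branch_meet assms by blast
  then show ?thesis unfolding inf_closed_def by simp
qed

lemma meet_branch_rest:
  assumes "x \<in> branch" "y \<in> rest"
  shows "meet x y = r"
proof -
  have x: "x \<in> V" "ancestor c x" and y: "y \<in> V" "\<not> ancestor c y"
    using assms unfolding rest_def branch_def by auto
  have "\<not> ancestor c (meet x y)"
    using ancestor_trans[OF y(1) meet_ancestor(2)[OF x(1) y(1)]] y(2) by blast
  then have "ancestor (meet x y) c"
    using ancestor_linear[OF x(1) meet_ancestor(1)[OF x(1) y(1)] x(2)] by blast
  moreover have "meet x y \<noteq> c" using meet_ancestor(2)[OF x(1) y(1)] y(2) by blast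
  ultimately show ?thesis using ancestor_child by blast
qed

lemma meet_in_branch: "x \<in> branch \<Longrightarrow> y \<in> branch \<Longrightarrow> meet x y \<in> branch"
  using branch_tree.meet_in_V by (simp add: branch_meet)

lemma meet_in_rest: "x \<in> rest \<Longrightarrow> y \<in> rest \<Longrightarrow> meet x y \<in> rest"
  using rest_tree.meet_in_V .

lemma inf_closed_with_root_iff:
  assumes "X \<subseteq> V" "r \<in> X"
  shows "inf_closed r par X \<longleftrightarrow> inf_closed r par (X \<inter> branch) \<and> inf_closed r par (X \<inter> rest)"
proof
  assume "inf_closed r par X"
  then show "inf_closed r par (X \<inter> branch) \<and> inf_closed r par (X \<inter> rest)"
    unfolding inf_closed_def using meet_in_branch meet_in_rest by simp
next
  assume parts: "inf_closed r par (X \<inter> branch) \<and> inf_closed r par (X \<inter> rest)"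
  have "meet x y \<in> X" if xy: "x \<in> X" "y \<in> X" for x y
  proof -
    consider "x \<in> branch" "y \<in> branch" | "x \<in> rest" "y \<in> rest"
      | "x \<in> branch" "y \<in> rest" | "x \<in> rest" "y \<in> branch"
      using xy assms(1) unfolding rest_def by blast
    then show ?thesis
    proof cases
      case 1
      then show ?thesis using parts xy unfolding inf_closed_def by blast
    next
      case 2
      then show ?thesis using parts xy unfolding inf_closed_def by blast
    next
      case 3
      then show ?thesis using meet_branch_rest assms(2) by simp
    next
      case 4
      then have "meet x y = meet y x" using meet_commute branch_subset_V rest_subset_V by blast
      then show ?thesis using meet_branch_rest 4 assms(2) by simp
    qed
  qed
  then show "inf_closed r par X" unfolding inf_closed_def by blast
qed

lemma inf_closed_without_root:
  assumes "X \<subseteq> V" "inf_closed r par X" "r \<notin> X"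
  shows "X \<subseteq> branch \<or> X \<subseteq> rest"
proof (rule ccontr)
  assume "\<not> (X \<subseteq> branch \<or> X \<subseteq> rest)"
  then obtain x y where "x \<in> X" "x \<in> branch" "y \<in> X" "y \<in> rest"
    using assms(1) unfolding rest_def by blast
  then show False using assms(2,3) meet_branch_rest unfolding inf_closed_def by metis
qed

lemma card_ic_with_root:
  "card {X \<in> ic_sets V r par. r \<in> X \<and> P (X \<inter> branch) \<and> Q (X \<inter> rest)} =
   card {A \<in> ic_sets branch c par. P A} * card {B \<in> ic_sets rest r par. r \<in> B \<and> Q B}"
  (is "card ?L = card ?A * card ?B")
proof -
  have split_in: "(X \<inter> branch, X \<inter> rest) \<in> ?A \<times> ?B" if "X \<in> ?L" for X
  proof -
    have X: "X \<subseteq> V" "inf_closed r par X" "r \<in> X" "P (X \<inter> branch)" "Q (X \<inter> rest)"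
      using that unfolding ic_sets_def by auto
    then have "inf_closed c par (X \<inter> branch)" "inf_closed r par (X \<inter> rest)"
      using inf_closed_with_root_iff[OF X(1,3)] inf_closed_branch_iff[of "X \<inter> branch"] by auto
    then show ?thesis using X root_in_rest unfolding ic_sets_def by auto
  qed
  have union_in: "A \<union> B \<in> ?L" if "A \<in> ?A" "B \<in> ?B" for A B
  proof -
    have A: "A \<subseteq> branch" "inf_closed c par A" "P A"
      and B: "B \<subseteq> rest" "inf_closed r par B" "r \<in> B" "Q B"
      using that unfolding ic_sets_def by auto
    have parts: "(A \<union> B) \<inter> branch = A" "(A \<union> B) \<inter> rest = B"
      using A(1) B(1) unfolding rest_def by auto
    have sub: "A \<union> B \<subseteq> V" using A(1) B(1) branch_subset_V rest_subset_V by blast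
    have "inf_closed r par (A \<union> B)"
      using inf_closed_with_root_iff[OF sub] parts A B inf_closed_branch_iff by simp
    then show ?thesis using sub parts A B unfolding ic_sets_def by simp
  qed
  have "bij_betw (\<lambda>X. (X \<inter> branch, X \<inter> rest)) ?L (?A \<times> ?B)"
  proof (rule bij_betw_byWitness[where f' = "\<lambda>(A, B). A \<union> B"])
    show "\<forall>X\<in>?L. (\<lambda>(A, B). A \<union> B) (X \<inter> branch, X \<inter> rest) = X"
      unfolding ic_sets_def rest_def by auto
    show "\<forall>AB\<in>?A \<times> ?B. (\<lambda>X. (X \<inter> branch, X \<inter> rest)) ((\<lambda>(A, B). A \<union> B) AB) = AB"
      using union_in split_in by (auto simp: rest_def ic_sets_def)
    show "(\<lambda>X. (X \<inter> branch, X \<inter> rest)) ` ?L \<subseteq> ?A \<times> ?B"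
      using split_in by blast
    show "(\<lambda>(A, B). A \<union> B) ` (?A \<times> ?B) \<subseteq> ?L"
      using union_in by auto
  qed
  then show ?thesis by (simp add: bij_betw_same_card card_cartesian_product)
qed

lemma card_ic_without_root:
  "card {X \<in> ic_sets V r par. X \<noteq> {} \<and> r \<notin> X \<and> P X} =
   card {A \<in> ic_sets branch c par. A \<noteq> {} \<and> P A} + card {B \<in> ic_sets rest r par. B \<noteq> {} \<and> r \<notin> B \<and> P B}"
  (is "card ?L = card ?A + card ?B")
proof -
  have "?L = ?A \<union> ?B"
  proof (intro equalityI subsetI)
    fix X assume L: "X \<in> ?L"
    then have X: "X \<subseteq> V" "inf_closed r par X" "r \<notin> X" unfolding ic_sets_def by auto
    then have "X \<subseteq> branch \<or> X \<subseteq> rest" by (rule inf_closed_without_root)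
    then show "X \<in> ?A \<union> ?B" using L X inf_closed_branch_iff unfolding ic_sets_def by auto
  next
    fix X assume "X \<in> ?A \<union> ?B"
    then show "X \<in> ?L"
      using inf_closed_branch_iff branch_subset_V rest_subset_V root_notin_branch
      unfolding ic_sets_def by auto
  qed
  moreover have "?A \<inter> ?B = {}" unfolding ic_sets_def rest_def by blast
  ultimately show ?thesis using branch_tree.finite_ic_sets rest_tree.finite_ic_sets by (simp add: card_Un_disjoint)
qed

lemma I1_decomp: "I1 V r par = (I_all branch c par + 1) * I1 rest r par"
  using card_ic_with_root[where P = "\<lambda>_. True" and Q = "\<lambda>_. True"] branch_tree.card_ic_sets
  unfolding I1_def by simp

lemma I0_decomp: "I0 V r par = I_all branch c par + I0 rest r par"
  using card_ic_without_root[where P = "\<lambda>_. True"] unfolding I0_def I_all_def by simp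

lemma card_ic_supsets:
  assumes "S \<subseteq> branch" "S \<noteq> {}"
  shows "card {X \<in> ic_sets V r par. S \<subseteq> X} =
    card {A \<in> ic_sets branch c par. S \<subseteq> A} * (1 + I1 rest r par)"
proof -
  have "{X \<in> ic_sets V r par. S \<subseteq> X} =
      {X \<in> ic_sets V r par. r \<in> X \<and> S \<subseteq> X \<inter> branch \<and> True} \<union>
      {X \<in> ic_sets V r par. X \<noteq> {} \<and> r \<notin> X \<and> S \<subseteq> X}"
    using assms by blast
  then have "card {X \<in> ic_sets V r par. S \<subseteq> X} =
      card {X \<in> ic_sets V r par. r \<in> X \<and> S \<subseteq> X \<inter> branch \<and> True} +
      card {X \<in> ic_sets V r par. X \<noteq> {} \<and> r \<notin> X \<and> S \<subseteq> X}"
    by (simp add: card_Un_disjoint finite_ic_sets disjoint_iff)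
  also have "\<dots> = card {A \<in> ic_sets branch c par. S \<subseteq> A} * I1 rest r par +
      (card {A \<in> ic_sets branch c par. A \<noteq> {} \<and> S \<subseteq> A} +
       card {B \<in> ic_sets rest r par. B \<noteq> {} \<and> r \<notin> B \<and> S \<subseteq> B})"
    using card_ic_with_root[where P = "\<lambda>A. S \<subseteq> A" and Q = "\<lambda>_. True"]
      card_ic_without_root[where P = "\<lambda>X. S \<subseteq> X"]
    unfolding I1_def by simp
  also have "{B \<in> ic_sets rest r par. B \<noteq> {} \<and> r \<notin> B \<and> S \<subseteq> B} = {}"
    using assms unfolding ic_sets_def rest_def by blast
  also have "{A \<in> ic_sets branch c par. A \<noteq> {} \<and> S \<subseteq> A} = {A \<in> ic_sets branch c par. S \<subseteq> A}"
    using assms(2) by blast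
  finally show ?thesis by simp
qed

lemma Iv_decomp: "v \<in> branch \<Longrightarrow> Iv V r par v = Iv branch c par v * (1 + I1 rest r par)"
  using card_ic_supsets[of "{v}"] unfolding Iv_def by simp

lemma Ivw_decomp:
  "v \<in> branch \<Longrightarrow> w \<in> branch \<Longrightarrow> Ivw V r par v w = Ivw branch c par v w * (1 + I1 rest r par)"
  using card_ic_supsets[of "{v, w}"] unfolding Ivw_def by simp

lemma Ivw_across_decomp:
  assumes "v \<in> branch" "w \<in> rest"
  shows "Ivw V r par v w = Iv branch c par v * Ivw rest r par w r"
proof -
  have "{X \<in> ic_sets V r par. v \<in> X \<and> w \<in> X} =
      {X \<in> ic_sets V r par. r \<in> X \<and> v \<in> X \<inter> branch \<and> w \<in> X \<inter> rest}"
    using inf_closed_without_root assms unfolding ic_sets_def rest_def by blast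
  then show ?thesis
    using card_ic_with_root[where P = "\<lambda>A. v \<in> A" and Q = "\<lambda>B. w \<in> B"]
    unfolding Ivw_def Iv_def by (simp add: conj_commute)
qed

lemma leaf_branch: "is_leaf V r par v \<Longrightarrow> v \<in> branch \<Longrightarrow> is_leaf branch c par v"
  unfolding is_leaf_def using branch_subset_V root_notin_branch by blast

lemma leaf_rest: "is_leaf V r par v \<Longrightarrow> v \<in> rest \<Longrightarrow> is_leaf rest r par v"
  unfolding is_leaf_def using rest_subset_V by blast

lemma card_branch_less: "card branch < card V"
  using psubset_card_mono[OF finite_V] branch_subset_V root_in_V root_notin_branch by blast

end

lemma (in rooted) obtain_branch_containing:
  assumes "x \<in> V" "x \<noteq> r"
  obtains c where "root_child V r par c" "x \<in> root_child.branch V r par c"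
proof -
  obtain c where c: "c \<in> V" "c \<noteq> r" "par c = r" "ancestor c x"
    using obtain_root_child[OF assms] .
  have child: "root_child V r par c" by unfold_locales (use c in auto)
  then interpret root_child V r par c .
  have "x \<in> branch" unfolding branch_def using assms(1) c(4) by blast
  with child show ?thesis by (rule that)
qed

lemma leaf_bound:
  assumes "rooted_tree V r par" "is_leaf V r par v"
  shows "I_all V r par + 2 \<le> 3 * Iv V r par v"
  using assms
proof (induction "card V" arbitrary: V r v rule: less_induct)
  case less
  interpret rooted V r par by (rule rooted.intro) (rule less.prems(1))
  have v: "v \<in> V" using less.prems(2) unfolding is_leaf_def by blast
  show ?case
  proof (cases "v = r")
    case True
    then have "Iv V r par v = I1 V r par" unfolding Iv_def I1_def by simp
    then show ?thesis using I_all_eq_I0_plus_I1 I0_less_I1 by linarith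
  next
    case False
    obtain c where "root_child V r par c" and v_branch: "v \<in> root_child.branch V r par c"
      using obtain_branch_containing[OF v False] .
    then interpret root_child V r par c by simp
    have IH: "I_all branch c par + 2 \<le> 3 * Iv branch c par v"
      using less.hyps[OF card_branch_less rooted_tree_branch leaf_branch[OF less.prems(2) v_branch]] .
    have "(I_all branch c par + 2) * (1 + I1 rest r par) \<le> 3 * Iv branch c par v * (1 + I1 rest r par)"
      using IH by (rule mult_right_mono) simp
    moreover have "I0 rest r par < I1 rest r par" by (rule rest_tree.I0_less_I1)
    ultimately show ?thesis
      unfolding I_all_eq_I0_plus_I1 I0_decomp I1_decomp Iv_decomp[OF v_branch]
      by (simp add: algebra_simps)
  qed
qed

lemma leaf_root_bound:
  assumes "rooted_tree V r par" "is_leaf V r par v"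
  shows "I1 V r par + 1 \<le> 3 * Ivw V r par v r"
proof -
  interpret rooted V r par by (rule rooted.intro) (rule assms(1))
  have v: "v \<in> V" using assms(2) unfolding is_leaf_def by blast
  show ?thesis
  proof (cases "v = r")
    case True
    then have "Ivw V r par v r = I1 V r par" unfolding Ivw_def I1_def by simp
    then show ?thesis using I0_less_I1 by linarith
  next
    case False
    obtain c where "root_child V r par c" and v_branch: "v \<in> root_child.branch V r par c"
      using obtain_branch_containing[OF v False] .
    then interpret root_child V r par c by simp
    have "I_all branch c par + 2 \<le> 3 * Iv branch c par v"
      using leaf_bound[OF rooted_tree_branch leaf_branch[OF assms(2) v_branch]] .
    then have "(I_all branch c par + 2) * I1 rest r par \<le> 3 * Iv branch c par v * I1 rest r par"
      by (rule mult_right_mono) simp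
    moreover have "Ivw rest r par r r = I1 rest r par" unfolding Ivw_def I1_def by simp
    moreover have "0 < I1 rest r par" using rest_tree.I0_less_I1 by linarith
    ultimately show ?thesis
      unfolding I1_decomp Ivw_across_decomp[OF v_branch root_in_rest]
      by (simp add: algebra_simps)
  qed
qed

lemma two_leaves_bound:
  assumes "rooted_tree V r par" "is_leaf V r par v" "is_leaf V r par w" "v \<noteq> w"
  shows "Iv V r par v \<le> 3 * Ivw V r par v w"
  using assms
proof (induction "card V" arbitrary: V r v w rule: less_induct)
  case less
  interpret rooted V r par by (rule rooted.intro) (rule less.prems(1))
  have v: "v \<in> V" and w: "w \<in> V" using less.prems(2,3) unfolding is_leaf_def by blast+
  have "v \<noteq> r" using root_leaf_imp_singleton less.prems(2,4) w by blast
  then obtain c where "root_child V r par c" and v_branch: "v \<in> root_child.branch V r par c"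
    using obtain_branch_containing[OF v] by blast
  then interpret root_child V r par c by simp
  show ?case
  proof (cases "w \<in> branch")
    case True
    have "Iv branch c par v \<le> 3 * Ivw branch c par v w"
      using less.hyps[OF card_branch_less rooted_tree_branch leaf_branch[OF less.prems(2) v_branch]
          leaf_branch[OF less.prems(3) True] less.prems(4)] .
    then have "Iv branch c par v * (1 + I1 rest r par) \<le> 3 * Ivw branch c par v w * (1 + I1 rest r par)"
      by (rule mult_right_mono) simp
    then show ?thesis unfolding Iv_decomp[OF v_branch] Ivw_decomp[OF v_branch True] by simp
  next
    case False
    then have w_rest: "w \<in> rest" unfolding rest_def using w by blast
    have "I1 rest r par + 1 \<le> 3 * Ivw rest r par w r"
      using leaf_root_bound[OF rooted_tree_rest leaf_rest[OF less.prems(3) w_rest]] .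
    then have "Iv branch c par v * (I1 rest r par + 1) \<le> Iv branch c par v * (3 * Ivw rest r par w r)"
      by (rule mult_left_mono) simp
    then show ?thesis unfolding Iv_decomp[OF v_branch] Ivw_across_decomp[OF v_branch w_rest]
      by (simp add: algebra_simps)
  qed
qed

theorem lemma2p4:
  fixes V :: "'a set" and r :: 'a and par :: "'a \<Rightarrow> 'a"
  assumes "rooted_tree V r par"
  shows "I1 V r par > I0 V r par
    \<and> (\<forall>v. is_leaf V r par v \<longrightarrow> 3 * Iv V r par v \<ge> I_all V r par + 2)
    \<and> (\<forall>v w. is_leaf V r par v \<and> is_leaf V r par w \<and> v \<noteq> w \<longrightarrow>
           3 * Ivw V r par v w \<ge> Iv V r par v)"
  using rooted.I0_less_I1[OF rooted.intro, OF assms] leaf_bound[OF assms] two_leaves_bound[OF assms]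
  by blast

end
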